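(* Let $\mathcal{D}$ be a finite domain of search histories with $|\mathcal{D}|\ge 2$ and $U\ge 1$. Algorithm $\hat{\mathcal{A}}$ is $(\epsilon',1/(|\mathcal{D}|-1))$-indistinguishable for all $\epsilon'>0$, but it is not $(\epsilon,\delta)$-probabilistic differentially private for any $\epsilon$ and any $\delta<1$.
   Context: A search log is an element $S=(S_1,\dots,S_U)\in\mathcal{D}^U$, where $S_i$ is user $i$'s search history; two search logs are neighboring if they differ in exactly one user's history. Algorithm $\hat{\mathcal{A}}$, on input $S$, samples uniformly at random an element of $\mathcal{D}\setminus\{S_1\}$ and returns it. An algorithm $\mathcal{A}$ with output space $\Omega$ is $(\epsilon,\delta)$-indistinguishable if for all neighboring $S,S'$ and all $\mathcal{O}\subseteq\Omega$: $\Pr[\mathcal{A}(S)\in\mathcal{O}]\le e^{\epsilon}\Pr[\mathcal{A}(S')\in\mathcal{O}]+\delta$. $\mathcal{A}$ is $(\epsilon,\delta)$-probabilistic differentially private if for every search log $S$ the output space $\Omega$ can be partitioned into $\Omega_1,\Omega_2$ with (1) $\Pr[\mathcal{A}(S)\in\Omega_2]\le\delta$ and (2) for all neighboring $S'$ and all $O\in\Omega_1$: $e^{-\epsilon}\Pr[\mathcal{A}(S')=O]\le\Pr[\mathcal{A}(S)=O]\le e^{\epsilon}\Pr[\mathcal{A}(S')=O]$. *)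

theory Defs
  imports "HOL-Probability.Probability"
begin

text \<open>A search log over the domain 'd with U users is a list of length U;
  user i's history is the i-th entry (user 1 = index 0).\<close>

definition search_logs :: "nat \<Rightarrow> 'd list set" where
  "search_logs U = {S. length S = U}"

definition neighboring :: "nat \<Rightarrow> 'd list \<Rightarrow> 'd list \<Rightarrow> bool" where
  "neighboring U S S' \<longleftrightarrow> length S = U \<and> length S' = U \<and>
     card {i. i < U \<and> S ! i \<noteq> S' ! i} = 1"

definition indistinguishable :: "nat \<Rightarrow> ('d list \<Rightarrow> 'o pmf) \<Rightarrow> real \<Rightarrow> real \<Rightarrow> bool" where
  "indistinguishable U A \<epsilon> \<delta> \<longleftrightarrow>
     (\<forall>S S'. neighboring U S S' \<longrightarrow>
        (\<forall>\<O> :: 'o set. measure_pmf.prob (A S) \<O> \<le> exp \<epsilon> * measure_pmf.prob (A S') \<O> + \<delta>))"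

definition prob_dp :: "nat \<Rightarrow> ('d list \<Rightarrow> 'o pmf) \<Rightarrow> real \<Rightarrow> real \<Rightarrow> bool" where
  "prob_dp U A \<epsilon> \<delta> \<longleftrightarrow>
     (\<forall>S \<in> search_logs U. \<exists>\<Omega>1 \<Omega>2 :: 'o set.
        \<Omega>1 \<union> \<Omega>2 = UNIV \<and> \<Omega>1 \<inter> \<Omega>2 = {} \<and>
        measure_pmf.prob (A S) \<Omega>2 \<le> \<delta> \<and>
        (\<forall>S'. neighboring U S S' \<longrightarrow> (\<forall>x \<in> \<Omega>1.
            exp (-\<epsilon>) * pmf (A S') x \<le> pmf (A S) x \<and>
            pmf (A S) x \<le> exp \<epsilon> * pmf (A S') x)))"

definition A_hat :: "'d::finite list \<Rightarrow> 'd pmf" where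
  "A_hat S = pmf_of_set (UNIV - {hd S})"

end

theory Submission
  imports Defs
begin

text \<open>Changing user 1's history moves the single excluded point of the uniform
  distribution, so the output probability of any set changes by at most one atom
  of mass \<open>1 / (|\<D>| - 1)\<close>: this gives indistinguishability.  On the other hand the
  new history itself has positive probability before and probability zero after
  the change, so no multiplicative bound can hold on it; every such point must lie
  in the exceptional set \<open>\<Omega>\<^sub>2\<close>, which then carries all of the probability.\<close>

lemma UNIV_Diff_singleton_nonempty:
  assumes "CARD('d::finite) \<ge> 2"
  shows "(UNIV :: 'd set) - {a} \<noteq> {}"
proof
  assume "(UNIV :: 'd set) - {a} = {}"
  then have "(UNIV :: 'd set) \<subseteq> {a}" by blast
  then have "CARD('d) \<le> 1" using card_mono[of "{a}" UNIV] by auto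
  with assms show False by simp
qed

lemma prob_A_hat:
  assumes "CARD('d::finite) \<ge> 2"
  shows "measure_pmf.prob (A_hat (S :: 'd list)) X =
    real (card (X - {hd S})) / (real CARD('d) - 1)"
proof -
  have "measure_pmf.prob (A_hat S) X =
      real (card ((UNIV - {hd S}) \<inter> X)) / real (card (UNIV - {hd S}))"
    unfolding A_hat_def using measure_pmf_of_set[OF UNIV_Diff_singleton_nonempty[OF assms]] by simp
  also have "(UNIV - {hd S}) \<inter> X = X - {hd S}" by blast
  also have "real (card (UNIV - {hd S})) = real CARD('d) - 1"
    using assms by (simp add: card_Diff_subset)
  finally show ?thesis .
qed

lemma pmf_A_hat:
  assumes "CARD('d::finite) \<ge> 2"
  shows "pmf (A_hat (S :: 'd list)) x = (if x = hd S then 0 else 1 / (real CARD('d) - 1))"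
  using assms pmf_of_set[OF UNIV_Diff_singleton_nonempty[OF assms, of "hd S"], of x] unfolding A_hat_def
  by (simp add: card_Diff_subset)

lemma prob_A_hat_le:
  assumes "CARD('d::finite) \<ge> 2"
  shows "measure_pmf.prob (A_hat (S :: 'd list)) X
    \<le> measure_pmf.prob (A_hat S') X + 1 / (real CARD('d) - 1)"
proof -
  have "card (X - {hd S}) \<le> card (insert (hd S') (X - {hd S'}))"
    by (rule card_mono) auto
  also have "\<dots> \<le> card (X - {hd S'}) + 1" by (simp add: card_insert_if del: insert_Diff_single)
  finally have "real (card (X - {hd S})) \<le> real (card (X - {hd S'})) + 1" by linarith
  moreover have "real CARD('d) - 1 > 0" using assms by simp
  ultimately show ?thesis
    unfolding prob_A_hat[OF assms] by (simp add: add_divide_distrib[symmetric] divide_right_mono)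
qed

lemma indistinguishable_A_hat:
  assumes "CARD('d::finite) \<ge> 2" and "\<epsilon> \<ge> 0"
  shows "indistinguishable U (A_hat :: 'd list \<Rightarrow> 'd pmf) \<epsilon> (1 / (real CARD('d) - 1))"
  unfolding indistinguishable_def
proof (intro allI impI)
  fix S S' :: "'d list" and X :: "'d set"
  have "measure_pmf.prob (A_hat S') X \<le> exp \<epsilon> * measure_pmf.prob (A_hat S') X"
    using assms(2) by (simp add: mult_le_cancel_right1)
  with prob_A_hat_le[OF assms(1), of S X S']
  show "measure_pmf.prob (A_hat S) X \<le> exp \<epsilon> * measure_pmf.prob (A_hat S') X + 1 / (real CARD('d) - 1)"
    by linarith
qed

lemma neighboring_update_first:
  assumes "length S = U" and "U \<ge> 1" and "b \<noteq> hd S"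
  shows "neighboring U S (S[0 := b])"
proof -
  have "S ! 0 = hd S" using assms(1,2) by (cases S) auto
  then have "{i. i < U \<and> S ! i \<noteq> S[0 := b] ! i} = {0}"
    using assms by (auto simp: nth_list_update)
  then show ?thesis unfolding neighboring_def using assms(1) by simp
qed

lemma prob_dp_prob_le:
  assumes "prob_dp U A \<epsilon> \<delta>" and "S \<in> search_logs U"
    and "\<And>x. x \<in> X \<Longrightarrow> pmf (A S) x > 0 \<and> (\<exists>S'. neighboring U S S' \<and> pmf (A S') x = 0)"
  shows "measure_pmf.prob (A S) X \<le> \<delta>"
proof -
  from assms(1,2) obtain \<Omega>1 \<Omega>2 where cover: "\<Omega>1 \<union> \<Omega>2 = UNIV"
    and small: "measure_pmf.prob (A S) \<Omega>2 \<le> \<delta>"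
    and bounded: "\<forall>S'. neighboring U S S' \<longrightarrow> (\<forall>x \<in> \<Omega>1.
      exp (-\<epsilon>) * pmf (A S') x \<le> pmf (A S) x \<and> pmf (A S) x \<le> exp \<epsilon> * pmf (A S') x)"
    unfolding prob_dp_def by (elim ballE exE conjE) auto
  have "X \<subseteq> \<Omega>2"
  proof
    fix x assume "x \<in> X"
    with assms(3) obtain S' where "pmf (A S) x > 0" "neighboring U S S'" "pmf (A S') x = 0"
      by blast
    then have "x \<notin> \<Omega>1" using bounded by fastforce
    with cover show "x \<in> \<Omega>2" by blast
  qed
  then have "measure_pmf.prob (A S) X \<le> measure_pmf.prob (A S) \<Omega>2"
    by (rule measure_pmf.finite_measure_mono) simp
  with small show ?thesis by simp
qed

lemma not_prob_dp_A_hat: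
  assumes "CARD('d::finite) \<ge> 2" and "U \<ge> 1" and "\<delta> < 1"
  shows "\<not> prob_dp U (A_hat :: 'd list \<Rightarrow> 'd pmf) \<epsilon> \<delta>"
proof
  assume dp: "prob_dp U (A_hat :: 'd list \<Rightarrow> 'd pmf) \<epsilon> \<delta>"
  define S :: "'d list" where "S = replicate U undefined"
  have S: "S \<in> search_logs U" unfolding S_def search_logs_def by simp
  have "measure_pmf.prob (A_hat S) (UNIV - {hd S}) \<le> \<delta>"
  proof (rule prob_dp_prob_le[OF dp S])
    fix b assume "b \<in> UNIV - {hd S}"
    then have "neighboring U S (S[0 := b])" and "pmf (A_hat S) b > 0"
      using neighboring_update_first[of S U b] assms(1,2) S
      by (auto simp: pmf_A_hat search_logs_def)
    moreover have "hd (S[0 := b]) = b" using assms(2) unfolding S_def by (cases U) auto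
    then have "pmf (A_hat (S[0 := b])) b = 0" using assms(1) by (simp add: pmf_A_hat)
    ultimately show "pmf (A_hat S) b > 0 \<and> (\<exists>S'. neighboring U S S' \<and> pmf (A_hat S') b = 0)"
      by blast
  qed
  moreover have "measure_pmf.prob (A_hat S) (UNIV - {hd S}) = 1"
    using assms(1) by (simp add: prob_A_hat card_Diff_subset)
  ultimately show False using assms(3) by simp
qed

theorem corollary13:
  fixes U :: nat
  assumes "CARD('d::finite) \<ge> 2" and "U \<ge> 1"
  shows "(\<forall>\<epsilon>'>0. indistinguishable U (A_hat :: 'd list \<Rightarrow> 'd pmf) \<epsilon>' (1 / (real CARD('d) - 1)))
       \<and> (\<forall>\<epsilon> \<delta>. \<delta> < 1 \<longrightarrow> \<not> prob_dp U (A_hat :: 'd list \<Rightarrow> 'd pmf) \<epsilon> \<delta>)"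
  using indistinguishable_A_hat[OF assms(1)] not_prob_dp_A_hat[OF assms] by simp

end
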